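(* Let $(G,\ell)$ be a connected undirected network in which every edge has length at least $1$, with $n$ vertices, highway dimension $h$ and diameter $D$. Then the labeling $L$ produced by the distance greedy algorithm d-HHL satisfies $|L(v)| = O(h\log n\log D)$ for every vertex $v$.
   Context: Let $G=(V,E)$ be an undirected graph with edge lengths $\ell$, $n=|V|$, $\mathrm{dist}$ the shortest-path distance. A hub labeling assigns to each $v$ a set $L(v)\subseteq V$ of hubs such that for every pair $u,w$ the set $L(u)\cap L(w)$ contains a vertex on some shortest $u$–$w$ path; $|L(v)|$ is the number of hubs of $v$. d-HHL: start with all labels empty; an unordered pair $[u,w]$ (including $u=w$) is covered if $L(u)\cap L(w)$ contains a vertex on a shortest $u$–$w$ path, and $U$ is the set of uncovered pairs. Each pair gets weight $W(u,w)=0$ if $\mathrm{dist}(u,w)=0$ and $W(u,w)=n^{2\lfloor\log_2\mathrm{dist}(u,w)\rfloor}$ otherwise. For each not-yet-selected vertex $v$, its center graph is the graph on $V$ with an edge (self-loop if $u=w$) $\{u,w\}$ for every $[u,w]\in U$ having some shortest $u$–$w$ path through $v$. In each iteration the algorithm selects a not-yet-selected vertex $v$ whose center graph has maximum total edge weight (ties broken arbitrarily), and adds $v$ to $L(u)$ for every non-isolated vertex $u$ of that center graph; it repeats until all pairs are covered. Highway dimension: for a shortest path $P=(v_1,\dots,v_k)$ and $r>0$, a shortest path $P'$ is an $r$-witness for $P$ if $\ell(P')>r$ and $P'$ is $P$ extended by at most one vertex at each end. $P$ is $r$-significant if it has an $r$-witness; $\mathcal P_r$ is the set of such paths. $P$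 is $(r,d)$-close to $v$ if it has an $r$-witness $P'$ with $\min_{w\in P'}\mathrm{dist}(v,w)\le d$. $S_r(v)$ is the set of $P\in\mathcal P_r$ that are $(r,2r)$-close to $v$. The highway dimension is the smallest $h$ such that for all $r>0$, $v\in V$ there is a set of at most $h$ vertices meeting every path of $S_r(v)$. *)

theory Defs
  imports Complex_Main
begin

definition wf_network :: "nat set \<Rightarrow> nat set set \<Rightarrow> (nat set \<Rightarrow> real) \<Rightarrow> bool" where
  "wf_network V E ell \<longleftrightarrow> finite V \<and>
     (\<forall>e\<in>E. \<exists>x y. e = {x, y} \<and> x \<noteq> y \<and> x \<in> V \<and> y \<in> V)"

definition walk :: "nat set \<Rightarrow> nat set set \<Rightarrow> nat list \<Rightarrow> bool" where
  "walk V E P \<longleftrightarrow> P \<noteq> [] \<and> set P \<subseteq> V \<and>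
     (\<forall>i. Suc i < length P \<longrightarrow> {P ! i, P ! Suc i} \<in> E)"

definition walk_len :: "(nat set \<Rightarrow> real) \<Rightarrow> nat list \<Rightarrow> real" where
  "walk_len ell P = (\<Sum>i<length P - 1. ell {P ! i, P ! Suc i})"

definition connected_net :: "nat set \<Rightarrow> nat set set \<Rightarrow> bool" where
  "connected_net V E \<longleftrightarrow> (\<forall>u\<in>V. \<forall>w\<in>V. \<exists>P. walk V E P \<and> hd P = u \<and> last P = w)"

definition dist :: "nat set \<Rightarrow> nat set set \<Rightarrow> (nat set \<Rightarrow> real) \<Rightarrow> nat \<Rightarrow> nat \<Rightarrow> real" where
  "dist V E ell u w = Inf {walk_len ell P | P. walk V E P \<and> hd P = u \<and> last P = w}"

definition shortest_path :: "nat set \<Rightarrow> nat set set \<Rightarrow> (nat set \<Rightarrow> real) \<Rightarrow> nat \<Rightarrow> nat \<Rightarrow> nat list \<Rightarrow> bool" where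
  "shortest_path V E ell u w P \<longleftrightarrow> walk V E P \<and> hd P = u \<and> last P = w \<and>
     walk_len ell P = dist V E ell u w"

definition is_shortest :: "nat set \<Rightarrow> nat set set \<Rightarrow> (nat set \<Rightarrow> real) \<Rightarrow> nat list \<Rightarrow> bool" where
  "is_shortest V E ell P \<longleftrightarrow> shortest_path V E ell (hd P) (last P) P"

definition diameter :: "nat set \<Rightarrow> nat set set \<Rightarrow> (nat set \<Rightarrow> real) \<Rightarrow> real" where
  "diameter V E ell = Max {dist V E ell u w | u w. u \<in> V \<and> w \<in> V}"

definition covered :: "nat set \<Rightarrow> nat set set \<Rightarrow> (nat set \<Rightarrow> real) \<Rightarrow> (nat \<Rightarrow> nat set) \<Rightarrow> nat \<Rightarrow> nat \<Rightarrow> bool" where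
  "covered V E ell L u w \<longleftrightarrow>
     (\<exists>x \<in> L u \<inter> L w. \<exists>P. shortest_path V E ell u w P \<and> x \<in> set P)"

text \<open>Unordered pairs [u,w] (including u = w) are represented by the sets {u,w}.\<close>
definition uncovered :: "nat set \<Rightarrow> nat set set \<Rightarrow> (nat set \<Rightarrow> real) \<Rightarrow> (nat \<Rightarrow> nat set) \<Rightarrow> nat set set" where
  "uncovered V E ell L = {{u, w} | u w. u \<in> V \<and> w \<in> V \<and> \<not> covered V E ell L u w}"

definition pair_weight :: "nat set \<Rightarrow> nat set set \<Rightarrow> (nat set \<Rightarrow> real) \<Rightarrow> nat \<Rightarrow> nat \<Rightarrow> real" where
  "pair_weight V E ell u w =
     (if dist V E ell u w = 0 then 0
      else real (card V) ^ (2 * nat \<lfloor>log 2 (dist V E ell u w)\<rfloor>))"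

definition center_edges :: "nat set \<Rightarrow> nat set set \<Rightarrow> (nat set \<Rightarrow> real) \<Rightarrow> (nat \<Rightarrow> nat set) \<Rightarrow> nat \<Rightarrow> nat set set" where
  "center_edges V E ell L v =
     {{u, w} | u w. u \<in> V \<and> w \<in> V \<and> \<not> covered V E ell L u w \<and>
        (\<exists>P. shortest_path V E ell u w P \<and> v \<in> set P)}"

definition center_weight :: "nat set \<Rightarrow> nat set set \<Rightarrow> (nat set \<Rightarrow> real) \<Rightarrow> (nat \<Rightarrow> nat set) \<Rightarrow> nat \<Rightarrow> real" where
  "center_weight V E ell L v =
     (\<Sum>p\<in>center_edges V E ell L v. pair_weight V E ell (Min p) (Max p))"

text \<open>One iteration of d-HHL on state (L, S), S = already selected vertices.\<close>
definition dHHL_step :: "nat set \<Rightarrow> nat set set \<Rightarrow> (nat set \<Rightarrow> real) \<Rightarrow>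
    (nat \<Rightarrow> nat set) \<times> nat set \<Rightarrow> (nat \<Rightarrow> nat set) \<times> nat set \<Rightarrow> bool" where
  "dHHL_step V E ell st st' \<longleftrightarrow>
     (\<exists>v. v \<in> V - snd st \<and> uncovered V E ell (fst st) \<noteq> {} \<and>
        (\<forall>x \<in> V - snd st. center_weight V E ell (fst st) x \<le> center_weight V E ell (fst st) v) \<and>
        st' = ((\<lambda>u. if u \<in> \<Union>(center_edges V E ell (fst st) v) then insert v (fst st u) else fst st u),
               insert v (snd st)))"

inductive dHHL_reach :: "nat set \<Rightarrow> nat set set \<Rightarrow> (nat set \<Rightarrow> real) \<Rightarrow>
    (nat \<Rightarrow> nat set) \<times> nat set \<Rightarrow> bool"
  for V E ell where
  init: "dHHL_reach V E ell (\<lambda>_. {}, {})"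
| step: "dHHL_reach V E ell st \<Longrightarrow> dHHL_step V E ell st st' \<Longrightarrow> dHHL_reach V E ell st'"

text \<open>L is a possible output of d-HHL (for some resolution of ties).\<close>
definition dHHL_output :: "nat set \<Rightarrow> nat set set \<Rightarrow> (nat set \<Rightarrow> real) \<Rightarrow> (nat \<Rightarrow> nat set) \<Rightarrow> bool" where
  "dHHL_output V E ell L \<longleftrightarrow> (\<exists>S. dHHL_reach V E ell (L, S) \<and> uncovered V E ell L = {})"

definition witness :: "nat set \<Rightarrow> nat set set \<Rightarrow> (nat set \<Rightarrow> real) \<Rightarrow> real \<Rightarrow> nat list \<Rightarrow> nat list \<Rightarrow> bool" where
  "witness V E ell r P P' \<longleftrightarrow> is_shortest V E ell P' \<and> walk_len ell P' > r \<and>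
     (\<exists>pre suf. length pre \<le> 1 \<and> length suf \<le> 1 \<and> P' = pre @ P @ suf)"

definition significant :: "nat set \<Rightarrow> nat set set \<Rightarrow> (nat set \<Rightarrow> real) \<Rightarrow> real \<Rightarrow> nat list \<Rightarrow> bool" where
  "significant V E ell r P \<longleftrightarrow> is_shortest V E ell P \<and> (\<exists>P'. witness V E ell r P P')"

definition close_to :: "nat set \<Rightarrow> nat set set \<Rightarrow> (nat set \<Rightarrow> real) \<Rightarrow> real \<Rightarrow> real \<Rightarrow> nat \<Rightarrow> nat list \<Rightarrow> bool" where
  "close_to V E ell r d v P \<longleftrightarrow>
     (\<exists>P'. witness V E ell r P P' \<and> Min (dist V E ell v ` set P') \<le> d)"

definition S_set :: "nat set \<Rightarrow> nat set set \<Rightarrow> (nat set \<Rightarrow> real) \<Rightarrow> real \<Rightarrow> nat \<Rightarrow> nat list set" where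
  "S_set V E ell r v = {P. significant V E ell r P \<and> close_to V E ell r (2 * r) v P}"

definition hd_bound :: "nat set \<Rightarrow> nat set set \<Rightarrow> (nat set \<Rightarrow> real) \<Rightarrow> nat \<Rightarrow> bool" where
  "hd_bound V E ell h \<longleftrightarrow>
     (\<forall>r>0. \<forall>v\<in>V. \<exists>H. H \<subseteq> V \<and> card H \<le> h \<and>
        (\<forall>P\<in>S_set V E ell r v. set P \<inter> H \<noteq> {}))"

definition highway_dim :: "nat set \<Rightarrow> nat set set \<Rightarrow> (nat set \<Rightarrow> real) \<Rightarrow> nat" where
  "highway_dim V E ell = (LEAST h. hd_bound V E ell h)"

end

theory Submission
  imports Defs
begin

text \<open>Fix a vertex \<open>u\<close> and let \<open>T\<^sub>i\<close> be the uncovered pairs of scale \<open>i = \<lfloor>log\<^sub>2 dist\<rfloor>\<close> having a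
  shortest path that passes within distance \<open>2\<^sup>i\<^sup>+\<^sup>1\<close> of \<open>u\<close>. The weights \<open>n\<^sup>2\<^sup>i\<close> make the greedy choice
  \<open>v\<close> maximise the number of centre-graph edges of the top uncovered scale \<open>M\<close>. If \<open>u\<close> receives the
  hub \<open>v\<close>, these edges all lie in \<open>T\<^sub>M\<close>. On the other hand the pairs of \<open>T\<^sub>M\<close> are significant paths
  close to \<open>u\<close>, so at most \<open>h\<close> vertices (none selected yet) meet all of them, and one of these
  covers at least a \<open>1/h\<close> fraction of \<open>T\<^sub>M\<close>. So \<open>v\<close> removes a \<open>1/h\<close> fraction of \<open>T\<^sub>M\<close>, which pays
  for the new hub in the potential \<open>|L(u)| + \<Sum>\<^sub>i (h ln |T\<^sub>i| + 1) + [{u} uncovered]\<close>, summed over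
  the \<open>O(log D)\<close> scales (once only zero-distance pairs remain, \<open>u\<close> can only gain the hub covering
  \<open>{u}\<close>). This potential never increases and is initially \<open>O(h log n log D)\<close>.\<close>

lemma walk_rev: "walk V E P \<Longrightarrow> walk V E (rev P)"
  unfolding walk_def
proof (intro conjI allI impI)
  assume w: "P \<noteq> [] \<and> set P \<subseteq> V \<and> (\<forall>i. Suc i < length P \<longrightarrow> {P ! i, P ! Suc i} \<in> E)"
  show "rev P \<noteq> []" "set (rev P) \<subseteq> V" using w by auto
  fix i assume i: "Suc i < length (rev P)"
  define j where "j = length P - Suc (Suc i)"
  have j: "Suc j < length P" "rev P ! i = P ! Suc j" "rev P ! Suc i = P ! j"
    using i unfolding j_def by (auto simp: rev_nth Suc_diff_Suc)
  show "{rev P ! i, rev P ! Suc i} \<in> E" using w j by (simp add: insert_commute)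
qed

lemma walk_len_rev: "walk_len ell (rev P) = walk_len ell P"
proof -
  let ?g = "\<lambda>j. ell {P ! j, P ! Suc j}"
  have "walk_len ell (rev P) = (\<Sum>i<length P - 1. ?g (length P - 1 - Suc i))"
    unfolding walk_len_def length_rev
  proof (intro sum.cong refl)
    fix i assume "i \<in> {..<length P - 1}"
    hence "rev P ! i = P ! Suc (length P - 1 - Suc i)" "rev P ! Suc i = P ! (length P - 1 - Suc i)"
      by (auto simp: rev_nth Suc_diff_Suc)
    thus "ell {rev P ! i, rev P ! Suc i} = ?g (length P - 1 - Suc i)" by (simp add: insert_commute)
  qed
  also have "\<dots> = walk_len ell P" unfolding walk_len_def by (rule sum.nat_diff_reindex)
  finally show ?thesis .
qed

lemma walk_rev_ends:
  assumes "walk V E P" "hd P = u" "last P = w"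
  shows "walk V E (rev P) \<and> hd (rev P) = w \<and> last (rev P) = u \<and> walk_len ell (rev P) = walk_len ell P"
  using assms walk_rev walk_len_rev by (auto simp: walk_def hd_rev last_rev)

lemma dist_commute: "dist V E ell u w = dist V E ell w u"
proof -
  have "{walk_len ell P | P. walk V E P \<and> hd P = u \<and> last P = w}
      = {walk_len ell P | P. walk V E P \<and> hd P = w \<and> last P = u}" for u w
    using walk_rev_ends[of V E _ u w ell] walk_rev_ends[of V E _ w u ell]
    by (smt (verit) Collect_cong rev_rev_ident)
  thus ?thesis unfolding dist_def by simp
qed

lemma shortest_path_rev: "shortest_path V E ell u w P \<Longrightarrow> shortest_path V E ell w u (rev P)"
  using walk_rev_ends dist_commute unfolding shortest_path_def by metis

lemma shortest_path_vertices:
  "shortest_path V E ell u w P \<Longrightarrow> u \<in> set P \<and> w \<in> set P \<and> set P \<subseteq> V"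
  unfolding shortest_path_def walk_def by auto

lemma covered_commute: "covered V E ell L u w \<Longrightarrow> covered V E ell L w u"
  unfolding covered_def using shortest_path_rev by (metis Int_commute set_rev)

lemma covered_mono: "(\<And>x. L x \<subseteq> L' x) \<Longrightarrow> covered V E ell L u w \<Longrightarrow> covered V E ell L' u w"
  unfolding covered_def by blast

lemma doubleton_mem_uncovered_iff:
  "u \<in> V \<Longrightarrow> w \<in> V \<Longrightarrow> {u, w} \<in> uncovered V E ell L \<longleftrightarrow> \<not> covered V E ell L u w"
  unfolding uncovered_def using covered_commute by (auto simp: doubleton_eq_iff)

lemma uncovered_mono:
  "(\<And>x. L x \<subseteq> L' x) \<Longrightarrow> uncovered V E ell L' \<subseteq> uncovered V E ell L"
  unfolding uncovered_def using covered_mono by blast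

lemma center_edges_subset_uncovered: "center_edges V E ell L v \<subseteq> uncovered V E ell L"
  unfolding center_edges_def uncovered_def by blast

lemma floor_log2_bounds:
  fixes d :: real
  assumes "1 \<le> d"
  shows "2 ^ nat \<lfloor>log 2 d\<rfloor> \<le> d" and "d < 2 ^ (nat \<lfloor>log 2 d\<rfloor> + 1)"
proof -
  have k: "real (nat \<lfloor>log 2 d\<rfloor>) = of_int \<lfloor>log 2 d\<rfloor>" using assms by simp
  have "2 ^ nat \<lfloor>log 2 d\<rfloor> = 2 powr real (nat \<lfloor>log 2 d\<rfloor>)"
    by (simp add: powr_realpow)
  also have "\<dots> \<le> 2 powr log 2 d" unfolding k by (intro powr_mono) auto
  finally show "2 ^ nat \<lfloor>log 2 d\<rfloor> \<le> d" using assms by simp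
  have "d = 2 powr log 2 d" using assms by simp
  also have "\<dots> < 2 powr (real (nat \<lfloor>log 2 d\<rfloor>) + 1)" unfolding k by (intro powr_less_mono) auto
  also have "\<dots> = 2 ^ (nat \<lfloor>log 2 d\<rfloor> + 1)" by (simp add: powr_add powr_realpow)
  finally show "d < 2 ^ (nat \<lfloor>log 2 d\<rfloor> + 1)" .
qed

definition log_potential :: "real \<Rightarrow> nat \<Rightarrow> real" where
  "log_potential h t = (if t = 0 then 0 else h * ln (real t) + 1)"

lemma log_potential_nonneg: "0 \<le> h \<Longrightarrow> 0 \<le> log_potential h t"
  unfolding log_potential_def by simp

lemma log_potential_mono:
  assumes "0 \<le> h" and "t' \<le> t"
  shows "log_potential h t' \<le> log_potential h t"
proof (cases "t' = 0")
  case True then show ?thesis using log_potential_nonneg[OF assms(1)] by (simp add: log_potential_def)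
next
  case False
  hence "h * ln (real t') \<le> h * ln (real t)" using assms by (intro mult_left_mono) auto
  then show ?thesis unfolding log_potential_def using False assms(2) by simp
qed

text \<open>The key inequality is \<open>ln (1 - 1/h) \<le> -1/h\<close>.\<close>

lemma log_potential_shrink:
  assumes h: "1 \<le> h" and t: "1 \<le> t" and shrink: "real t' \<le> t - t / h"
  shows "log_potential h t' \<le> log_potential h t - 1"
proof (cases "t' = 0")
  case True then show ?thesis unfolding log_potential_def using t h by simp
next
  case False
  have tpos: "0 < real t" using t by simp
  have "0 < real t * (1 - 1/h)" using shrink False by (simp add: algebra_simps)
  hence q: "0 < 1 - 1/h" using tpos by (simp add: zero_less_mult_iff)
  have "ln (real t') \<le> ln (real t * (1 - 1/h))"
    using shrink False by (simp add: algebra_simps)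
  also have "\<dots> = ln (real t) + ln (1 - 1/h)" using tpos q by (simp add: ln_mult_pos)
  also have "\<dots> \<le> ln (real t) - 1/h" using ln_le_minus_one[OF q] by simp
  finally have "h * ln (real t') \<le> h * (ln (real t) - 1/h)"
    using h by (intro mult_left_mono) auto
  also have "\<dots> = h * ln (real t) - 1" using h by (simp add: right_diff_distrib)
  finally have "h * ln (real t') \<le> h * ln (real t) - 1" .
  thus ?thesis unfolding log_potential_def using False t by simp
qed

lemma log_potential_bound:
  fixes h b :: real and n K :: nat
  assumes h: "1 \<le> h" and n: "2 \<le> n" and K: "real K \<le> b" and b: "1 \<le> b"
  shows "real (K + 1) * log_potential h (n * n) + 1 \<le> 7 * h * log 2 (real n) * b"
proof -
  define a where "a = log 2 (real n)"
  have a: "1 \<le> a" unfolding a_def using n by simp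
  have ha: "1 \<le> h * a" using mult_mono[OF h a] h by simp
  have "ln (real n) = a * ln 2" unfolding a_def log_def by simp
  also have "\<dots> \<le> a" using a ln_2_less_1 by (simp add: mult_left_le)
  finally have "log_potential h (n * n) \<le> 2 * h * a + 1"
    using n h by (simp add: log_potential_def ln_mult_pos)
  also have "\<dots> \<le> 3 * (h * a)" using ha by (simp add: mult.commute)
  finally have "real (K + 1) * log_potential h (n * n) \<le> (2 * b) * (3 * (h * a))"
    using K b h by (intro mult_mono) (auto intro: log_potential_nonneg)
  moreover have "1 \<le> h * a * b" using mult_mono[OF ha b] h a by simp
  ultimately show ?thesis unfolding a_def by (simp add: algebra_simps)
qed

lemma sum_le_sum_diff_one:
  fixes f g :: "'a \<Rightarrow> real"
  assumes "finite I" "i \<in> I" "\<And>j. j \<in> I \<Longrightarrow> f j \<le> g j" "f i \<le> g i - 1"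
  shows "sum f I \<le> sum g I - 1"
proof -
  have "sum f I = f i + sum f (I - {i})" using assms(1,2) by (rule sum.remove)
  also have "\<dots> \<le> (g i - 1) + sum g (I - {i})" using assms(3,4) by (intro add_mono sum_mono) auto
  also have "\<dots> = sum g I - 1" using sum.remove[OF assms(1,2), of g] by simp
  finally show ?thesis .
qed

locale network =
  fixes V :: "nat set" and E :: "nat set set" and ell :: "nat set \<Rightarrow> real"
  assumes wf: "wf_network V E ell" and connected: "connected_net V E"
    and two_vertices: "card V \<ge> 2" and edge_len_ge_1: "\<forall>e\<in>E. ell e \<ge> 1"
begin

abbreviation \<delta> :: "nat \<Rightarrow> nat \<Rightarrow> real" where "\<delta> \<equiv> dist V E ell"

lemma finite_V: "finite V"
  using wf unfolding wf_network_def by auto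

lemma length_le_walk_len: "walk V E P \<Longrightarrow> real (length P - 1) \<le> walk_len ell P"
proof -
  assume P: "walk V E P"
  have "real (length P - 1) = (\<Sum>i<length P - 1. 1)" by simp
  also have "\<dots> \<le> walk_len ell P" unfolding walk_len_def
    using P edge_len_ge_1 unfolding walk_def by (intro sum_mono) auto
  finally show ?thesis .
qed

lemma walk_len_nonneg: "walk V E P \<Longrightarrow> 0 \<le> walk_len ell P"
  using length_le_walk_len by (meson of_nat_0_le_iff order_trans)

lemma dist_le_walk_len: "walk V E P \<Longrightarrow> hd P = u \<Longrightarrow> last P = w \<Longrightarrow> \<delta> u w \<le> walk_len ell P"
  unfolding dist_def using walk_len_nonneg by (intro cInf_lower bdd_belowI) blast+

text \<open>Edges have length at least one, so a walk with more than \<open>walk_len P\<^sub>0 + 1\<close> vertices is longer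
  than \<open>P\<^sub>0\<close>: the infimum defining the distance ranges over finitely many relevant walks and is
  attained.\<close>

lemma shortest_path_exists:
  assumes u: "u \<in> V" and w: "w \<in> V"
  obtains P where "shortest_path V E ell u w P"
proof -
  obtain P0 where P0: "walk V E P0" "hd P0 = u" "last P0 = w"
    using connected u w unfolding connected_net_def by blast
  define k where "k = nat \<lceil>walk_len ell P0\<rceil> + 1"
  define W where "W = {P. walk V E P \<and> hd P = u \<and> last P = w \<and> length P \<le> k}"
  have "W \<subseteq> {xs. set xs \<subseteq> V \<and> length xs \<le> k}" unfolding W_def walk_def by auto
  hence finW: "finite W" using finite_lists_length_le[OF finite_V] finite_subset by blast
  have "length P0 \<le> k" using length_le_walk_len[OF P0(1)] unfolding k_def by linarith
  hence P0W: "P0 \<in> W" unfolding W_def using P0 by blast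
  obtain P1 where P1: "P1 \<in> W" "\<forall>Q\<in>W. walk_len ell P1 \<le> walk_len ell Q"
    using finW P0W by (metis arg_min_if_finite empty_iff leI)
  have "walk_len ell P1 \<le> walk_len ell Q" if "walk V E Q" "hd Q = u" "last Q = w" for Q
  proof (cases "length Q \<le> k")
    case True then show ?thesis using P1 that unfolding W_def by blast
  next
    case False
    have "walk_len ell P1 \<le> walk_len ell P0" using P1(2) P0W by blast
    then show ?thesis using length_le_walk_len[OF that(1)] False unfolding k_def by linarith
  qed
  hence "\<delta> u w = walk_len ell P1" unfolding dist_def
    using P1(1) unfolding W_def by (intro cInf_eq_minimum) blast+
  thus ?thesis using that P1 unfolding shortest_path_def W_def by auto
qed

lemma dist_nonneg: "u \<in> V \<Longrightarrow> w \<in> V \<Longrightarrow> 0 \<le> \<delta> u w"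
  by (metis shortest_path_exists shortest_path_def walk_len_nonneg)

lemma dist_self: "u \<in> V \<Longrightarrow> \<delta> u u = 0"
  using dist_le_walk_len[of "[u]" u u] dist_nonneg[of u u]
  by (simp add: walk_def walk_len_def)

lemma dist_ge_1: assumes "u \<in> V" "w \<in> V" "u \<noteq> w" shows "1 \<le> \<delta> u w"
proof -
  obtain P where P: "shortest_path V E ell u w P" using shortest_path_exists assms by blast
  have "2 \<le> length P"
    using P assms(3) unfolding shortest_path_def walk_def by (cases P) (auto simp: Suc_le_eq)
  thus ?thesis using P length_le_walk_len unfolding shortest_path_def by force
qed

lemma dist_eq_0_iff: "u \<in> V \<Longrightarrow> w \<in> V \<Longrightarrow> \<delta> u w = 0 \<longleftrightarrow> u = w"
  using dist_ge_1 dist_self by force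

lemma dist_le_of_mem_shortest_path:
  assumes P: "shortest_path V E ell u w P" and x: "x \<in> set P"
  shows "\<delta> u x \<le> \<delta> u w" and "\<delta> x w \<le> \<delta> u w"
proof -
  have prefix: "\<delta> a y \<le> \<delta> a b" if Q: "shortest_path V E ell a b Q" "y \<in> set Q" for a b y Q
  proof -
    obtain k where k: "k < length Q" "Q ! k = y" using Q(2) by (metis in_set_conv_nth)
    have wQ: "walk V E Q" using Q unfolding shortest_path_def by blast
    have "walk V E (take (Suc k) Q)" using wQ k unfolding walk_def by (auto dest: in_set_takeD)
    moreover have "hd (take (Suc k) Q) = a" using Q unfolding shortest_path_def by (simp add: hd_take)
    moreover have "last (take (Suc k) Q) = y" using k by (simp add: take_Suc_conv_app_nth)
    ultimately have "\<delta> a y \<le> walk_len ell (take (Suc k) Q)" by (rule dist_le_walk_len)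
    also have "\<dots> = (\<Sum>i<k. ell {Q ! i, Q ! Suc i})" unfolding walk_len_def using k by simp
    also have "\<dots> \<le> walk_len ell Q" unfolding walk_len_def
    proof (rule sum_mono2)
      fix i assume "i \<in> {..<length Q - 1} - {..<k}"
      hence "{Q ! i, Q ! Suc i} \<in> E" using wQ unfolding walk_def by auto
      thus "0 \<le> ell {Q ! i, Q ! Suc i}" using edge_len_ge_1 by force
    qed (use k in auto)
    finally show ?thesis using Q unfolding shortest_path_def by simp
  qed
  show "\<delta> u x \<le> \<delta> u w" using prefix[OF P x] .
  show "\<delta> x w \<le> \<delta> u w" using prefix[OF shortest_path_rev[OF P]] x dist_commute by (metis set_rev)
qed

lemma dist_le_diameter: "u \<in> V \<Longrightarrow> w \<in> V \<Longrightarrow> \<delta> u w \<le> diameter V E ell"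
  unfolding diameter_def
proof (rule Max_ge)
  have "{\<delta> a b | a b. a \<in> V \<and> b \<in> V} = (\<lambda>(a, b). \<delta> a b) ` (V \<times> V)" by auto
  thus "finite {\<delta> a b | a b. a \<in> V \<and> b \<in> V}" using finite_V by simp
qed blast

lemma uncovered_subset_doubletons: "uncovered V E ell L \<subseteq> (\<lambda>(a, b). {a, b}) ` (V \<times> V)"
  unfolding uncovered_def by auto

lemma finite_uncovered: "finite (uncovered V E ell L)"
  using finite_subset[OF uncovered_subset_doubletons] finite_V by simp

lemma card_uncovered_le: "card (uncovered V E ell L) \<le> card V * card V"
proof -
  have "card (uncovered V E ell L) \<le> card ((\<lambda>(a, b). {a, b}) ` (V \<times> V))"
    using uncovered_subset_doubletons finite_V by (intro card_mono) auto
  also have "\<dots> \<le> card (V \<times> V)" using finite_V by (intro card_image_le) simp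
  finally show ?thesis by (simp add: card_cartesian_product)
qed

lemma finite_center_edges: "finite (center_edges V E ell L v)"
  using finite_subset[OF center_edges_subset_uncovered finite_uncovered] .

definition add_hub :: "(nat \<Rightarrow> nat set) \<Rightarrow> nat \<Rightarrow> nat \<Rightarrow> nat set" where
  "add_hub L v = (\<lambda>u. if u \<in> \<Union>(center_edges V E ell L v) then insert v (L u) else L u)"

lemma dHHL_stepE:
  assumes "dHHL_step V E ell (L, S) st'"
  obtains v where "v \<in> V - S" and "\<forall>x\<in>V - S. center_weight V E ell L x \<le> center_weight V E ell L v"
    and "st' = (add_hub L v, insert v S)"
  using assms unfolding dHHL_step_def add_hub_def prod.sel by blast

lemma uncovered_add_hub: "uncovered V E ell (add_hub L v) \<subseteq> uncovered V E ell L"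
  by (rule uncovered_mono) (auto simp: add_hub_def)

lemma center_edge_covered_add_hub:
  assumes "p \<in> center_edges V E ell L v" shows "p \<notin> uncovered V E ell (add_hub L v)"
proof -
  obtain a b P where ab: "p = {a, b}" "a \<in> V" "b \<in> V" "shortest_path V E ell a b P" "v \<in> set P"
    using assms unfolding center_edges_def by blast
  have "v \<in> add_hub L v a \<inter> add_hub L v b" using assms ab(1) unfolding add_hub_def by auto
  hence "covered V E ell (add_hub L v) a b" using ab unfolding covered_def by blast
  thus ?thesis using doubleton_mem_uncovered_iff[OF ab(2,3)] unfolding ab(1) by simp
qed

lemma center_edge_of_uncovered:
  assumes "{a, b} \<in> uncovered V E ell L" "shortest_path V E ell a b P" "x \<in> set P"
  shows "{a, b} \<in> center_edges V E ell L x"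
proof -
  have ab: "a \<in> V" "b \<in> V" using shortest_path_vertices[OF assms(2)] by auto
  hence "\<not> covered V E ell L a b" using assms(1) doubleton_mem_uncovered_iff by simp
  thus ?thesis using ab assms(2,3) unfolding center_edges_def by blast
qed

lemma uncovered_avoids_selected:
  assumes "dHHL_reach V E ell (L, S)" "{a, b} \<in> uncovered V E ell L" "shortest_path V E ell a b P"
  shows "set P \<inter> S = {}"
proof -
  have "\<forall>a b P. {a, b} \<in> uncovered V E ell (fst st) \<longrightarrow> shortest_path V E ell a b P \<longrightarrow>
      set P \<inter> snd st = {}" if "dHHL_reach V E ell st" for st
    using that
  proof (induction rule: dHHL_reach.induct)
    case init
    show ?case by simp
  next
    case (step st st')
    obtain L S where st: "st = (L, S)" by (cases st)
    obtain v where v: "v \<in> V - S" "st' = (add_hub L v, insert v S)"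
      using step.hyps(2) unfolding st by (elim dHHL_stepE)
    show ?case
    proof (intro allI impI)
      fix a b P assume ab': "{a, b} \<in> uncovered V E ell (fst st')"
        and P: "shortest_path V E ell a b P"
      have ab: "{a, b} \<in> uncovered V E ell L" using ab' uncovered_add_hub v(2) by auto
      have "v \<notin> set P"
      proof
        assume "v \<in> set P"
        hence "{a, b} \<in> center_edges V E ell L v" by (rule center_edge_of_uncovered[OF ab P])
        thus False using center_edge_covered_add_hub ab' v(2) by auto
      qed
      moreover have "set P \<inter> S = {}" using step.IH[unfolded st fst_conv snd_conv] ab P by blast
      ultimately show "set P \<inter> snd st' = {}" using v(2) by auto
    qed
  qed
  from this[OF assms(1)] show ?thesis using assms(2,3) by simp
qed

definition pair_dist :: "nat set \<Rightarrow> real" where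
  "pair_dist p = \<delta> (Min p) (Max p)"

definition pair_scale :: "nat set \<Rightarrow> nat" where
  "pair_scale p = nat \<lfloor>log 2 (pair_dist p)\<rfloor>"

lemma pair_dist_doubleton: "pair_dist {a, b} = \<delta> a b"
  unfolding pair_dist_def by (cases "a \<le> b") (simp_all add: max_def min_def dist_commute)

lemma pair_weight_eq:
  "pair_weight V E ell (Min p) (Max p) =
     (if pair_dist p = 0 then 0 else real (card V) ^ (2 * pair_scale p))"
  unfolding pair_weight_def pair_dist_def pair_scale_def by simp

lemma uncovered_pair_dist_ge_1:
  assumes "p \<in> uncovered V E ell L" "pair_dist p \<noteq> 0"
  shows "1 \<le> pair_dist p"
  using assms dist_ge_1 dist_self pair_dist_doubleton unfolding uncovered_def by force

lemma uncovered_pair_scale_bounds: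
  assumes "p \<in> uncovered V E ell L" "pair_dist p \<noteq> 0"
  shows "2 ^ pair_scale p \<le> pair_dist p" and "pair_dist p < 2 ^ (pair_scale p + 1)"
  using floor_log2_bounds[OF uncovered_pair_dist_ge_1[OF assms]] unfolding pair_scale_def by auto

lemma card_positive_uncovered_less:
  "card {p \<in> uncovered V E ell L. pair_dist p \<noteq> 0} < card V * card V"
proof -
  obtain a0 where a0: "a0 \<in> V" using two_vertices by fastforce
  have "{p \<in> uncovered V E ell L. pair_dist p \<noteq> 0} \<subseteq> (\<lambda>(a, b). {a, b}) ` (V \<times> V - {(a0, a0)})"
    using dist_self pair_dist_doubleton unfolding uncovered_def by fastforce
  hence "card {p \<in> uncovered V E ell L. pair_dist p \<noteq> 0} \<le> card (V \<times> V - {(a0, a0)})"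
    using finite_V by (meson card_image_le card_mono finite_Diff finite_SigmaI finite_imageI le_trans)
  also have "\<dots> < card (V \<times> V)" using a0 finite_V by (intro psubset_card_mono) auto
  finally show ?thesis by (simp add: card_cartesian_product)
qed

definition scale_center_edges :: "(nat \<Rightarrow> nat set) \<Rightarrow> nat \<Rightarrow> nat \<Rightarrow> nat set set" where
  "scale_center_edges L M x = {p \<in> center_edges V E ell L x. pair_dist p \<noteq> 0 \<and> pair_scale p = M}"

lemma finite_scale_center_edges: "finite (scale_center_edges L M x)"
  using finite_center_edges unfolding scale_center_edges_def by simp

text \<open>Pair weights grow by the factor \<open>n\<^sup>2\<close> from one scale to the next, while a centre graph has
  fewer than \<open>n\<^sup>2\<close> edges of positive length: all edges below the top scale \<open>M\<close> together weigh
  less than a single edge of scale \<open>M\<close>.\<close>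

lemma lower_scale_weight_less:
  fixes y :: nat
  assumes top: "\<forall>p\<in>uncovered V E ell L. pair_dist p \<noteq> 0 \<longrightarrow> pair_scale p \<le> M"
  defines "B \<equiv> {p \<in> center_edges V E ell L y. pair_dist p \<noteq> 0 \<and> pair_scale p \<noteq> M}"
  shows "(\<Sum>p\<in>B. pair_weight V E ell (Min p) (Max p)) < real (card V) ^ (2 * M)"
proof (cases "B = {}")
  case False
  define n where "n = real (card V)"
  have n: "2 \<le> n" unfolding n_def using two_vertices by simp
  have B_sub: "B \<subseteq> {p \<in> uncovered V E ell L. pair_dist p \<noteq> 0}"
    unfolding B_def using center_edges_subset_uncovered by blast
  have scale_less: "pair_scale p < M" if "p \<in> B" for p
    using that top B_sub unfolding B_def by fastforce
  hence M: "1 \<le> M" using False by fastforce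
  have "card B \<le> card {p \<in> uncovered V E ell L. pair_dist p \<noteq> 0}"
    using finite_uncovered by (intro card_mono[OF _ B_sub]) simp
  hence "card B + 1 \<le> card V * card V" using card_positive_uncovered_less[of L] by linarith
  hence "real (card B + 1) \<le> real (card V * card V)" by (rule of_nat_mono)
  hence cardB: "real (card B) \<le> n * n - 1" unfolding n_def by simp
  have "(\<Sum>p\<in>B. pair_weight V E ell (Min p) (Max p)) \<le> real (card B) * n ^ (2 * (M - 1))"
  proof (rule sum_bounded_above)
    fix p assume p: "p \<in> B"
    hence "pair_scale p \<le> M - 1" using scale_less by fastforce
    thus "pair_weight V E ell (Min p) (Max p) \<le> n ^ (2 * (M - 1))"
      using p n unfolding pair_weight_eq n_def B_def by (auto intro!: power_increasing)
  qed
  also have "\<dots> \<le> (n * n - 1) * n ^ (2 * (M - 1))" using cardB by (simp add: mult_right_mono)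
  also have "\<dots> < n * n * n ^ (2 * (M - 1))" using n by simp
  also have "\<dots> = n ^ (2 * M)" using M
    by (metis Suc_diff_le diff_Suc_1 mult_Suc_right power2_eq_square power_add power_mult)
  finally show ?thesis unfolding n_def .
qed (use two_vertices in simp)

lemma center_weight_bounds:
  fixes y :: nat
  assumes top: "\<forall>p\<in>uncovered V E ell L. pair_dist p \<noteq> 0 \<longrightarrow> pair_scale p \<le> M"
  defines "N \<equiv> real (card V) ^ (2 * M)" and "A \<equiv> scale_center_edges L M y"
  shows "N * card A \<le> center_weight V E ell L y" and "center_weight V E ell L y < N * (card A + 1)"
proof -
  define C where "C = center_edges V E ell L y"
  define B where "B = {p \<in> C. pair_dist p \<noteq> 0 \<and> pair_scale p \<noteq> M}"
  define f where "f = (\<lambda>p. pair_weight V E ell (Min p) (Max p))"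
  have AC: "A \<subseteq> C" unfolding A_def C_def scale_center_edges_def by blast
  have "center_weight V E ell L y = sum f A + sum f (C - A)"
    unfolding center_weight_def C_def[symmetric] f_def
    using sum.subset_diff[OF AC] finite_center_edges C_def by (simp add: add.commute)
  also have "sum f A = N * card A"
    unfolding f_def pair_weight_eq by (simp add: A_def scale_center_edges_def N_def)
  also have "sum f (C - A) = sum f B"
    using finite_center_edges unfolding C_def
    by (intro sum.mono_neutral_right) (auto simp: A_def B_def C_def f_def pair_weight_eq scale_center_edges_def)
  finally have weight: "center_weight V E ell L y = N * card A + sum f B" .
  have "0 \<le> sum f B" unfolding f_def pair_weight_eq by (intro sum_nonneg) simp
  moreover have "sum f B < N"
    using lower_scale_weight_less[OF top] unfolding f_def B_def C_def N_def .
  ultimately show "N * card A \<le> center_weight V E ell L y" and "center_weight V E ell L y < N * (card A + 1)"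
    unfolding weight by (simp_all add: algebra_simps)
qed

lemma card_scale_center_edges_le:
  assumes top: "\<forall>p\<in>uncovered V E ell L. pair_dist p \<noteq> 0 \<longrightarrow> pair_scale p \<le> M"
    and heavier: "center_weight V E ell L x \<le> center_weight V E ell L v"
  shows "card (scale_center_edges L M x) \<le> card (scale_center_edges L M v)"
proof -
  define N where "N = real (card V) ^ (2 * M)"
  have "N * card (scale_center_edges L M x) < N * (card (scale_center_edges L M v) + 1)"
    using center_weight_bounds[OF top, of x] center_weight_bounds[OF top, of v] heavier
    unfolding N_def by linarith
  moreover have "0 < N" unfolding N_def using two_vertices by simp
  ultimately show ?thesis by (simp add: mult_less_cancel_left_pos)
qed

lemma hd_bound_highway_dim: "hd_bound V E ell (highway_dim V E ell)"
proof -
  have "set P \<inter> V \<noteq> {}" if "P \<in> S_set V E ell r v" for r v P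
    using that unfolding S_set_def significant_def is_shortest_def shortest_path_def walk_def
    by (simp add: Int_absorb2)
  hence "hd_bound V E ell (card V)" unfolding hd_bound_def by blast
  thus ?thesis unfolding highway_dim_def by (rule LeastI)
qed

text \<open>A shortest path of length at least \<open>2\<^sup>i\<close> that comes within distance \<open>2\<^sup>i\<^sup>+\<^sup>1\<close> of \<open>u\<close> is its own
  \<open>r\<close>-witness and is \<open>(r, 2r)\<close>-close to \<open>u\<close>, for one \<open>r < 2\<^sup>i\<close> that exists because \<open>V\<close> is finite.\<close>

lemma near_paths_hitting_set:
  assumes u: "u \<in> V"
  shows "\<exists>H \<subseteq> V. card H \<le> highway_dim V E ell \<and>
    (\<forall>a b P x. shortest_path V E ell a b P \<longrightarrow> 2 ^ i \<le> \<delta> a b \<longrightarrow> x \<in> set P \<longrightarrow>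
       \<delta> u x < 2 ^ (i + 1) \<longrightarrow> set P \<inter> H \<noteq> {})"
proof -
  define R where "R = {\<delta> u x | x. x \<in> V \<and> \<delta> u x < 2 ^ (i + 1)}"
  define r :: real where "r = max (2 ^ i / 2) (Max R / 2)"
  have finR: "finite R" unfolding R_def using finite_V by simp
  moreover have "0 \<in> R" unfolding R_def using u dist_self by force
  ultimately have "Max R \<in> R" by (intro Max_in) auto
  hence r: "0 < r" "r < 2 ^ i" unfolding r_def R_def by (auto simp: less_max_iff_disj)
  have near: "y \<le> 2 * r" if "y \<in> R" for y using Max_ge[OF finR that] unfolding r_def by simp
  obtain H where H: "H \<subseteq> V" "card H \<le> highway_dim V E ell" "\<forall>P\<in>S_set V E ell r u. set P \<inter> H \<noteq> {}"
    using hd_bound_highway_dim[unfolded hd_bound_def, rule_format, OF r(1) u] by blast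
  have "P \<in> S_set V E ell r u"
    if P: "shortest_path V E ell a b P" "2 ^ i \<le> \<delta> a b" "x \<in> set P" "\<delta> u x < 2 ^ (i + 1)"
    for a b P x
  proof -
    have shortest: "is_shortest V E ell P" using P(1) unfolding is_shortest_def shortest_path_def by auto
    have "walk_len ell P > r" using P(1,2) r(2) unfolding shortest_path_def by linarith
    moreover have "\<exists>pre suf. length pre \<le> 1 \<and> length suf \<le> 1 \<and> P = pre @ P @ suf"
      by (intro exI[of _ "[]"]) simp
    ultimately have wit: "witness V E ell r P P" unfolding witness_def using shortest by blast
    have "x \<in> V" using shortest_path_vertices[OF P(1)] P(3) by blast
    hence "\<delta> u x \<le> 2 * r" using near P(4) unfolding R_def by blast
    moreover have "Min (\<delta> u ` set P) \<le> \<delta> u x" using P(3) by simp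
    ultimately have "Min (\<delta> u ` set P) \<le> 2 * r" by linarith
    hence "close_to V E ell r (2 * r) u P" unfolding close_to_def using wit by blast
    thus ?thesis unfolding S_set_def significant_def using shortest wit by blast
  qed
  hence "\<forall>a b P x. shortest_path V E ell a b P \<longrightarrow> 2 ^ i \<le> \<delta> a b \<longrightarrow> x \<in> set P \<longrightarrow>
       \<delta> u x < 2 ^ (i + 1) \<longrightarrow> set P \<inter> H \<noteq> {}" using H(3) by blast
  thus ?thesis using H(1,2) by blast
qed

lemma highway_dim_ge_1: "1 \<le> highway_dim V E ell"
proof -
  have "\<not> card V \<le> Suc 0" using two_vertices by linarith
  then obtain a b where ab: "a \<in> V" "b \<in> V" "a \<noteq> b"
    using card_le_Suc0_iff_eq[OF finite_V] by blast
  obtain P where P: "shortest_path V E ell a b P" using shortest_path_exists ab by blast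
  define i where "i = nat \<lfloor>log 2 (\<delta> a b)\<rfloor>"
  obtain H where H: "H \<subseteq> V" "card H \<le> highway_dim V E ell"
    and hit: "\<forall>a' b' P x. shortest_path V E ell a' b' P \<longrightarrow> 2 ^ i \<le> \<delta> a' b' \<longrightarrow> x \<in> set P \<longrightarrow>
       \<delta> a x < 2 ^ (i + 1) \<longrightarrow> set P \<inter> H \<noteq> {}"
    using near_paths_hitting_set[OF ab(1), of i] by blast
  have "2 ^ i \<le> \<delta> a b" unfolding i_def using floor_log2_bounds(1) dist_ge_1 ab by blast
  moreover have "a \<in> set P" "\<delta> a a < 2 ^ (i + 1)"
    using shortest_path_vertices[OF P] dist_self[OF ab(1)] by auto
  ultimately have "H \<noteq> {}" using hit P by blast
  hence "card H \<noteq> 0" using finite_subset[OF H(1) finite_V] by simp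
  thus ?thesis using H(2) by linarith
qed

definition near_pairs :: "nat \<Rightarrow> (nat \<Rightarrow> nat set) \<Rightarrow> nat \<Rightarrow> nat set set" where
  "near_pairs u L i = {p \<in> uncovered V E ell L. pair_dist p \<noteq> 0 \<and> pair_scale p = i \<and>
     (\<exists>a b P x. p = {a, b} \<and> shortest_path V E ell a b P \<and> x \<in> set P \<and> \<delta> u x < 2 ^ (i + 1))}"

lemma finite_near_pairs: "finite (near_pairs u L i)"
  using finite_uncovered unfolding near_pairs_def by simp

lemma card_near_pairs_le: "card (near_pairs u L i) \<le> card V * card V"
proof -
  have "near_pairs u L i \<subseteq> uncovered V E ell L" unfolding near_pairs_def by blast
  thus ?thesis using card_mono[OF finite_uncovered] card_uncovered_le le_trans by blast
qed

lemma near_pairs_mono: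
  "uncovered V E ell L' \<subseteq> uncovered V E ell L \<Longrightarrow> near_pairs u L' i \<subseteq> near_pairs u L i"
  unfolding near_pairs_def by blast

definition max_scale :: "(nat \<Rightarrow> nat set) \<Rightarrow> nat" where
  "max_scale L = Max (pair_scale ` {p \<in> uncovered V E ell L. pair_dist p \<noteq> 0})"

lemma finite_positive_scales: "finite (pair_scale ` {p \<in> uncovered V E ell L. pair_dist p \<noteq> 0})"
  using finite_uncovered by simp

lemma pair_scale_le_max_scale:
  "p \<in> uncovered V E ell L \<Longrightarrow> pair_dist p \<noteq> 0 \<Longrightarrow> pair_scale p \<le> max_scale L"
  unfolding max_scale_def by (intro Max_ge[OF finite_positive_scales] imageI) simp

lemma max_scale_attained:
  assumes "p \<in> uncovered V E ell L" "pair_dist p \<noteq> 0"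
  obtains q where "q \<in> uncovered V E ell L" "pair_dist q \<noteq> 0" "pair_scale q = max_scale L"
proof -
  have "pair_scale p \<in> pair_scale ` {p \<in> uncovered V E ell L. pair_dist p \<noteq> 0}"
    using assms by simp
  hence "max_scale L \<in> pair_scale ` {p \<in> uncovered V E ell L. pair_dist p \<noteq> 0}"
    unfolding max_scale_def by (intro Max_in[OF finite_positive_scales]) auto
  then obtain q where "q \<in> {p \<in> uncovered V E ell L. pair_dist p \<noteq> 0}" "max_scale L = pair_scale q"
    by (rule imageE)
  thus ?thesis using that[of q] by simp
qed

definition scale_bound :: nat where
  "scale_bound = nat \<lfloor>log 2 (max 2 (diameter V E ell))\<rfloor>"

lemma max_scale_le_scale_bound:
  assumes "p \<in> uncovered V E ell L" "pair_dist p \<noteq> 0"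
  shows "max_scale L \<le> scale_bound"
proof -
  obtain q where q: "q \<in> uncovered V E ell L" "pair_dist q \<noteq> 0" "pair_scale q = max_scale L"
    using max_scale_attained[OF assms] .
  then obtain a b where ab: "q = {a, b}" "a \<in> V" "b \<in> V" unfolding uncovered_def by blast
  hence "pair_dist q \<le> max 2 (diameter V E ell)"
    using dist_le_diameter[OF ab(2,3)] pair_dist_doubleton by (simp add: le_max_iff_disj)
  moreover have "1 \<le> pair_dist q" using uncovered_pair_dist_ge_1[OF q(1,2)] .
  ultimately have "pair_scale q \<le> scale_bound"
    unfolding pair_scale_def scale_bound_def by (intro nat_mono floor_mono) auto
  thus ?thesis using q(3) by simp
qed

lemma dist_less_of_center_edge:
  assumes top: "\<forall>q\<in>uncovered V E ell L. pair_dist q \<noteq> 0 \<longrightarrow> pair_scale q \<le> M"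
    and p: "p \<in> center_edges V E ell L v" and u: "u \<in> p"
  shows "\<delta> u v < 2 ^ (M + 1)"
proof -
  obtain a b P where ab: "p = {a, b}" "shortest_path V E ell a b P" "v \<in> set P"
    using p unfolding center_edges_def by blast
  have "\<delta> u v \<le> \<delta> a b"
  proof (cases "u = a")
    case True
    thus ?thesis using dist_le_of_mem_shortest_path(1)[OF ab(2,3)] by simp
  next
    case False
    hence "u = b" using u ab(1) by simp
    thus ?thesis using dist_le_of_mem_shortest_path(2)[OF ab(2,3)] dist_commute by metis
  qed
  moreover have "\<delta> a b < 2 ^ (M + 1)"
  proof (cases "pair_dist p = 0")
    case True
    thus ?thesis using ab(1) pair_dist_doubleton by simp
  next
    case False
    have pU: "p \<in> uncovered V E ell L" using p center_edges_subset_uncovered by blast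
    have "pair_dist p < 2 ^ (pair_scale p + 1)" using uncovered_pair_scale_bounds(2)[OF pU False] .
    also have "\<dots> \<le> 2 ^ (M + 1)" using top pU False by (intro power_increasing) auto
    finally show ?thesis using ab(1) pair_dist_doubleton by simp
  qed
  ultimately show ?thesis by linarith
qed

lemma scale_center_edges_subset_near_pairs:
  assumes top: "\<forall>q\<in>uncovered V E ell L. pair_dist q \<noteq> 0 \<longrightarrow> pair_scale q \<le> M"
    and hub: "u \<in> \<Union>(center_edges V E ell L v)"
  shows "scale_center_edges L M v \<subseteq> near_pairs u L M"
proof
  fix q assume q: "q \<in> scale_center_edges L M v"
  hence qC: "q \<in> center_edges V E ell L v" and qs: "pair_dist q \<noteq> 0" "pair_scale q = M"
    unfolding scale_center_edges_def by auto
  obtain c d Q where "q = {c, d}" "shortest_path V E ell c d Q" "v \<in> set Q"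
    using qC unfolding center_edges_def by blast
  moreover have "\<delta> u v < 2 ^ (M + 1)" using hub dist_less_of_center_edge[OF top] by blast
  ultimately have "\<exists>a b P x. q = {a, b} \<and> shortest_path V E ell a b P \<and> x \<in> set P \<and> \<delta> u x < 2 ^ (M + 1)"
    by blast
  moreover have "q \<in> uncovered V E ell L" using qC center_edges_subset_uncovered by blast
  ultimately show "q \<in> near_pairs u L M" using qs unfolding near_pairs_def by simp
qed

lemma scale_center_edges_greedy_nonempty:
  assumes reach: "dHHL_reach V E ell (L, S)" and v: "v \<in> V - S"
    and greedy: "\<forall>x\<in>V - S. center_weight V E ell L x \<le> center_weight V E ell L v"
    and pos: "p \<in> uncovered V E ell L" "pair_dist p \<noteq> 0"
  shows "scale_center_edges L (max_scale L) v \<noteq> {}"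
proof -
  obtain q where q: "q \<in> uncovered V E ell L" "pair_dist q \<noteq> 0" "pair_scale q = max_scale L"
    using max_scale_attained[OF pos] .
  then obtain a b where ab: "q = {a, b}" "a \<in> V" "b \<in> V" unfolding uncovered_def by blast
  obtain P where P: "shortest_path V E ell a b P" using shortest_path_exists ab(2,3) by blast
  have a: "a \<in> set P" using shortest_path_vertices[OF P] by simp
  hence "a \<in> V - S" using uncovered_avoids_selected[OF reach] q(1) ab P by blast
  moreover have "q \<in> scale_center_edges L (max_scale L) a"
    using center_edge_of_uncovered[OF _ P a] q ab(1) unfolding scale_center_edges_def by simp
  ultimately have "card (scale_center_edges L (max_scale L) v) \<noteq> 0"
    using card_scale_center_edges_le[OF _ greedy[rule_format]] pair_scale_le_max_scale
      finite_scale_center_edges by (metis card_0_eq empty_iff le_zero_eq)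
  thus ?thesis by auto
qed

text \<open>Every near pair of the top scale has a shortest path that is long and passes close to \<open>u\<close>,
  hence meets the hitting set \<open>H\<close> of size at most \<open>h\<close> in an unselected vertex; the greedy choice
  \<open>v\<close> covers at least as many such pairs as any vertex of \<open>H\<close>.\<close>

lemma card_near_pairs_le_greedy:
  assumes reach: "dHHL_reach V E ell (L, S)" and v: "v \<in> V - S"
    and greedy: "\<forall>x\<in>V - S. center_weight V E ell L x \<le> center_weight V E ell L v"
    and u: "u \<in> V"
  defines "M \<equiv> max_scale L"
  shows "card (near_pairs u L M) \<le> highway_dim V E ell * card (scale_center_edges L M v)"
proof -
  obtain H where H: "H \<subseteq> V" "card H \<le> highway_dim V E ell"
    and hit: "\<forall>a b P x. shortest_path V E ell a b P \<longrightarrow> 2 ^ M \<le> \<delta> a b \<longrightarrow> x \<in> set P \<longrightarrow>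
       \<delta> u x < 2 ^ (M + 1) \<longrightarrow> set P \<inter> H \<noteq> {}"
    using near_paths_hitting_set[OF u, of M] by blast
  have finH: "finite (H - S)" using finite_subset[OF H(1) finite_V] by simp
  have "near_pairs u L M \<subseteq> (\<Union>y\<in>H - S. scale_center_edges L M y)"
  proof
    fix q assume "q \<in> near_pairs u L M"
    then obtain c d Q x where cd: "q = {c, d}" "shortest_path V E ell c d Q" "x \<in> set Q"
      "\<delta> u x < 2 ^ (M + 1)" and qU: "q \<in> uncovered V E ell L" and qs: "pair_dist q \<noteq> 0" "pair_scale q = M"
      unfolding near_pairs_def by blast
    have "2 ^ M \<le> \<delta> c d"
      using uncovered_pair_scale_bounds(1)[OF qU qs(1)] qs(2) cd(1) pair_dist_doubleton by simp
    then obtain y where y: "y \<in> set Q" "y \<in> H" using hit cd by blast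
    have "y \<notin> S" using uncovered_avoids_selected[OF reach] qU cd y by blast
    moreover have "q \<in> scale_center_edges L M y"
      using center_edge_of_uncovered[OF _ cd(2) y(1)] qU qs cd(1) unfolding scale_center_edges_def by simp
    ultimately show "q \<in> (\<Union>y\<in>H - S. scale_center_edges L M y)" using y(2) by blast
  qed
  hence "card (near_pairs u L M) \<le> card (\<Union>y\<in>H - S. scale_center_edges L M y)"
    using finH finite_scale_center_edges by (intro card_mono) auto
  also have "\<dots> \<le> (\<Sum>y\<in>H - S. card (scale_center_edges L M y))" by (rule card_UN_le[OF finH])
  also have "\<dots> \<le> (\<Sum>y\<in>H - S. card (scale_center_edges L M v))"
    using H(1) greedy pair_scale_le_max_scale unfolding M_def
    by (intro sum_mono card_scale_center_edges_le) auto
  also have "\<dots> \<le> highway_dim V E ell * card (scale_center_edges L M v)"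
    using H(2) card_mono[OF finite_subset[OF H(1) finite_V], of "H - S"] by (simp add: mult_right_mono)
  finally show ?thesis .
qed

lemma near_pairs_add_hub:
  "near_pairs u (add_hub L v) M \<subseteq> near_pairs u L M - scale_center_edges L M v"
proof
  fix q assume q: "q \<in> near_pairs u (add_hub L v) M"
  hence "q \<in> near_pairs u L M" using near_pairs_mono[OF uncovered_add_hub] by blast
  moreover have "q \<in> uncovered V E ell (add_hub L v)" using q unfolding near_pairs_def by simp
  hence "q \<notin> scale_center_edges L M v"
    using center_edge_covered_add_hub unfolding scale_center_edges_def by blast
  ultimately show "q \<in> near_pairs u L M - scale_center_edges L M v" by simp
qed

lemma near_pairs_shrink:
  assumes reach: "dHHL_reach V E ell (L, S)" and v: "v \<in> V - S"
    and greedy: "\<forall>x\<in>V - S. center_weight V E ell L x \<le> center_weight V E ell L v"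
    and u: "u \<in> V" and hub: "u \<in> \<Union>(center_edges V E ell L v)"
    and pos: "p \<in> uncovered V E ell L" "pair_dist p \<noteq> 0"
  defines "M \<equiv> max_scale L" and "h \<equiv> real (highway_dim V E ell)"
  shows "1 \<le> card (near_pairs u L M)"
    and "card (near_pairs u (add_hub L v) M) \<le> card (near_pairs u L M) - card (near_pairs u L M) / h"
proof -
  let ?T = "near_pairs u L M" and ?A = "scale_center_edges L M v"
  have AT: "?A \<subseteq> ?T"
    using scale_center_edges_subset_near_pairs[OF _ hub] pair_scale_le_max_scale unfolding M_def by blast
  have "?A \<noteq> {}" using scale_center_edges_greedy_nonempty[OF reach v greedy pos] unfolding M_def .
  hence "card ?A \<noteq> 0" using finite_scale_center_edges by simp
  thus "1 \<le> card ?T" using card_mono[OF finite_near_pairs AT] by linarith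
  have "card (near_pairs u (add_hub L v) M) \<le> card (?T - ?A)"
    using near_pairs_add_hub finite_near_pairs by (intro card_mono) auto
  also have "\<dots> = card ?T - card ?A" using card_Diff_subset[OF finite_scale_center_edges AT] .
  finally have "card (near_pairs u (add_hub L v) M) + card ?A \<le> card ?T"
    using card_mono[OF finite_near_pairs AT] by linarith
  moreover have "card ?T / h \<le> card ?A"
    using card_near_pairs_le_greedy[OF reach v greedy u] highway_dim_ge_1
    unfolding h_def M_def by (simp add: divide_le_eq mult.commute flip: of_nat_mult)
  ultimately show "card (near_pairs u (add_hub L v) M) \<le> card ?T - card ?T / h" by linarith
qed

lemma self_pair_of_center_edge:
  assumes zero: "\<forall>q\<in>uncovered V E ell L. pair_dist q = 0"
    and p: "p \<in> center_edges V E ell L v" and u: "u \<in> p"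
  shows "p = {u}"
proof -
  obtain a b where ab: "p = {a, b}" "a \<in> V" "b \<in> V"
    using p unfolding center_edges_def by blast
  have "\<delta> a b = 0" using zero p center_edges_subset_uncovered ab(1) pair_dist_doubleton by force
  thus ?thesis using ab u dist_eq_0_iff by auto
qed

definition near_potential :: "nat \<Rightarrow> (nat \<Rightarrow> nat set) \<Rightarrow> real" where
  "near_potential u L =
     (\<Sum>i\<le>scale_bound. log_potential (real (highway_dim V E ell)) (card (near_pairs u L i)))"

lemma near_potential_nonneg: "0 \<le> near_potential u L"
  unfolding near_potential_def by (intro sum_nonneg log_potential_nonneg) simp

lemma near_potential_le:
  "near_potential u L \<le> real (scale_bound + 1) * log_potential (real (highway_dim V E ell)) (card V * card V)"
proof -
  have "near_potential u L
      \<le> (\<Sum>i\<le>scale_bound. log_potential (real (highway_dim V E ell)) (card V * card V))"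
    unfolding near_potential_def by (intro sum_mono log_potential_mono card_near_pairs_le) simp
  thus ?thesis by simp
qed

lemma card_near_pairs_add_hub_le: "card (near_pairs u (add_hub L v) i) \<le> card (near_pairs u L i)"
  by (intro card_mono finite_near_pairs near_pairs_mono uncovered_add_hub)

lemma near_potential_add_hub_le: "near_potential u (add_hub L v) \<le> near_potential u L"
  unfolding near_potential_def
  by (intro sum_mono log_potential_mono card_near_pairs_add_hub_le) simp

lemma near_potential_add_hub_drop:
  assumes reach: "dHHL_reach V E ell (L, S)" and v: "v \<in> V - S"
    and greedy: "\<forall>x\<in>V - S. center_weight V E ell L x \<le> center_weight V E ell L v"
    and u: "u \<in> V" and hub: "u \<in> \<Union>(center_edges V E ell L v)"
    and pos: "p \<in> uncovered V E ell L" "pair_dist p \<noteq> 0"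
  shows "near_potential u (add_hub L v) \<le> near_potential u L - 1"
  unfolding near_potential_def
proof (rule sum_le_sum_diff_one)
  show "max_scale L \<in> {..scale_bound}"
    using max_scale_le_scale_bound[OF pos] by simp
  have "1 \<le> real (highway_dim V E ell)" using highway_dim_ge_1 by simp
  thus "log_potential (real (highway_dim V E ell)) (card (near_pairs u (add_hub L v) (max_scale L)))
      \<le> log_potential (real (highway_dim V E ell)) (card (near_pairs u L (max_scale L))) - 1"
    using near_pairs_shrink[OF reach v greedy u hub pos] by (rule log_potential_shrink)
qed (simp_all add: log_potential_mono card_near_pairs_add_hub_le)

definition hub_potential :: "nat \<Rightarrow> (nat \<Rightarrow> nat set) \<Rightarrow> real" where
  "hub_potential u L =
     real (card (L u)) + near_potential u L + (if {u} \<in> uncovered V E ell L then 1 else 0)"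

text \<open>Whenever \<open>u\<close> receives a hub, either the near pairs of the top scale shrink by the factor
  \<open>1 - 1/h\<close>, or only zero-distance pairs are left and the self-pair \<open>{u}\<close> gets covered.\<close>

lemma hub_potential_step:
  assumes reach: "dHHL_reach V E ell (L, S)" and step: "dHHL_step V E ell (L, S) st'" and u: "u \<in> V"
  shows "hub_potential u (fst st') \<le> hub_potential u L"
proof -
  obtain v where v: "v \<in> V - S" and greedy: "\<forall>x\<in>V - S. center_weight V E ell L x \<le> center_weight V E ell L v"
    and st': "st' = (add_hub L v, insert v S)"
    using step by (elim dHHL_stepE)
  let ?L' = "add_hub L v"
  have self_le: "(if {u} \<in> uncovered V E ell ?L' then 1 else 0) \<le> (if {u} \<in> uncovered V E ell L then 1 else (0::real))"
    using uncovered_add_hub by auto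
  show ?thesis
  proof (cases "u \<in> \<Union>(center_edges V E ell L v)")
    case False
    hence same: "?L' u = L u" unfolding add_hub_def by simp
    show ?thesis unfolding hub_potential_def st' fst_conv same
      using near_potential_add_hub_le[of u L v] self_le by linarith
  next
    case hub: True
    have "card (?L' u) \<le> card (L u) + 1" using hub unfolding add_hub_def by (simp add: card_insert_le_m1)
    hence label: "real (card (?L' u)) \<le> real (card (L u)) + 1" by linarith
    show ?thesis
    proof (cases "\<exists>p\<in>uncovered V E ell L. pair_dist p \<noteq> 0")
      case True
      then obtain p where "p \<in> uncovered V E ell L" "pair_dist p \<noteq> 0" by blast
      thus ?thesis unfolding hub_potential_def st' fst_conv
        using near_potential_add_hub_drop[OF reach v greedy u hub] label self_le by fastforce
    next
      case False
      then obtain p where "p \<in> center_edges V E ell L v" "p = {u}"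
        using hub self_pair_of_center_edge by blast
      hence "{u} \<in> uncovered V E ell L" "{u} \<notin> uncovered V E ell ?L'"
        using center_edges_subset_uncovered center_edge_covered_add_hub by blast+
      thus ?thesis unfolding hub_potential_def st' fst_conv
        using label near_potential_add_hub_le[of u L v] by simp
    qed
  qed
qed

lemma card_label_le:
  assumes "dHHL_output V E ell L" "u \<in> V"
  shows "card (L u) \<le> real (scale_bound + 1) * log_potential (real (highway_dim V E ell)) (card V * card V) + 1"
proof -
  have "hub_potential u (fst st) \<le>
      real (scale_bound + 1) * log_potential (real (highway_dim V E ell)) (card V * card V) + 1"
    if "dHHL_reach V E ell st" for st
    using that
  proof (induction rule: dHHL_reach.induct)
    case init
    have "near_potential u (\<lambda>_. {})
        \<le> real (scale_bound + 1) * log_potential (real (highway_dim V E ell)) (card V * card V)"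
      by (rule near_potential_le)
    thus ?case unfolding hub_potential_def by (cases "{u} \<in> uncovered V E ell (\<lambda>_. {})") simp_all
  next
    case (step st st')
    obtain L S where st: "st = (L, S)" by (cases st)
    have "hub_potential u (fst st') \<le> hub_potential u L"
      using hub_potential_step[OF _ _ assms(2)] step.hyps unfolding st by blast
    thus ?case using step.IH unfolding st by simp
  qed
  moreover obtain S where "dHHL_reach V E ell (L, S)" using assms(1) unfolding dHHL_output_def by blast
  ultimately show ?thesis
    using near_potential_nonneg[of u L] unfolding hub_potential_def by (fastforce split: if_splits)
qed

end

theorem mainTheorem2:
  shows "\<exists>c>0. \<forall>(V::nat set) E ell L v.
     wf_network V E ell \<and> connected_net V E \<and> card V \<ge> 2 \<and>
     (\<forall>e\<in>E. ell e \<ge> 1) \<and> dHHL_output V E ell L \<and> v \<in> V \<longrightarrow>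
     real (card (L v)) \<le> c * real (highway_dim V E ell) * log 2 (real (card V))
                          * log 2 (max 2 (diameter V E ell))"
proof (intro exI[of _ 7] conjI allI impI)
  fix V E ell L v
  assume A: "wf_network V E ell \<and> connected_net V E \<and> card V \<ge> 2 \<and>
     (\<forall>e\<in>E. ell e \<ge> 1) \<and> dHHL_output V E ell L \<and> v \<in> V"
  then interpret network V E ell by unfold_locales auto
  have "real (card (L v))
      \<le> real (scale_bound + 1) * log_potential (real (highway_dim V E ell)) (card V * card V) + 1"
    using card_label_le A by blast
  also have "\<dots> \<le> 7 * real (highway_dim V E ell) * log 2 (real (card V)) * log 2 (max 2 (diameter V E ell))"
  proof (rule log_potential_bound)
    have "0 \<le> log 2 (max 2 (diameter V E ell))" by simp
    thus "real scale_bound \<le> log 2 (max 2 (diameter V E ell))"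
      unfolding scale_bound_def using of_int_floor_le by simp
  qed (use highway_dim_ge_1 two_vertices in auto)
  finally show "real (card (L v)) \<le> 7 * real (highway_dim V E ell) * log 2 (real (card V))
                          * log 2 (max 2 (diameter V E ell))" .
qed simp

end
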